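(* Let $(E,\mathcal{L},g)$ be a uniform affine oriented matroid with $|E|>1$ such that every maximal element of $\mathcal{L}^{++}$ is a tope of $\mathcal{L}$ and $X\backslash g\ne0$ for all $X\in\mathcal{L}^+$. Let $X\in\mathcal{L}^{++}$. Then a tope $T$ of $\mathcal{L}$ with $T>X$ lies in $\mathcal{C}_X$ if and only if $T\backslash g$ is a tope in $\mathcal{D}_X$. Moreover the map $r:\mathcal{C}_X\to\mathcal{D}_X$, $r(T)=T\backslash g$, is a bijection, with inverse $h$ given by $h(T)_g=+$ and $h(T)_e=T_e$ for $e\neq g$.
   Context: An oriented matroid $(E,\mathcal{L})$ is given by covectors $\mathcal{L}\subseteq\{+,-,0\}^E$ satisfying the standard covector axioms, ordered componentwise by $0<+$, $0<-$; topes are maximal covectors. Uniform: the underlying matroid (flats $z(X)=\{e:X_e=0\}$) of rank $r$ has every $r$-subset of $E$ as a basis. Affine oriented matroid $(E,\mathcal{L},g)$: $g\in E$ a non-loop; $\mathcal{L}^+=\{X\in\mathcal{L}:X_g=+\}$; bounded complex $\mathcal{L}^{++}=\{X\in\mathcal{L}^+:\ \text{all } 0\neq Y\le X \text{ in } \mathcal{L} \text{ have } Y_g=+\}$. $X\backslash g$ is the restriction of $X$ to $E\setminus\{g\}$; contraction $\mathcal{L}/g=\{Y\backslash g: Y\in\mathcal{L}, Y_g=0\}$. For $X\in\mathcal{L}^{++}$: $\mathcal{C}_X$ is the set of topes $T$ of $\mathcal{L}$ with $T>X$ and $T\notin\mathcal{L}^{++}$; $\mathcal{D}_X$ is the set of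 topes $T$ of $\mathcal{L}/g$ with $T_e=X_e$ for all $e\in\operatorname{supp}(X)\setminus\{g\}$ (equivalently $T\ge X\backslash g$). *)

theory Defs
  imports Main
begin

datatype sign = Zero | Pos | Neg

type_synonym 'a svec = "'a \<Rightarrow> sign"

definition zerov :: "'a svec" where "zerov = (\<lambda>_. Zero)"

fun sneg :: "sign \<Rightarrow> sign" where
  "sneg Zero = Zero" | "sneg Pos = Neg" | "sneg Neg = Pos"

definition negv :: "'a svec \<Rightarrow> 'a svec" where "negv X = (\<lambda>e. sneg (X e))"

definition compv :: "'a svec \<Rightarrow> 'a svec \<Rightarrow> 'a svec" where
  "compv X Y = (\<lambda>e. if X e \<noteq> Zero then X e else Y e)"

definition supp :: "'a svec \<Rightarrow> 'a set" where "supp X = {e. X e \<noteq> Zero}"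

definition sepset :: "'a svec \<Rightarrow> 'a svec \<Rightarrow> 'a set" where
  "sepset X Y = {e. X e \<noteq> Zero \<and> X e = sneg (Y e)}"

definition sle :: "'a svec \<Rightarrow> 'a svec \<Rightarrow> bool" where
  "sle X Y \<longleftrightarrow> (\<forall>e. X e = Zero \<or> X e = Y e)"

definition sless :: "'a svec \<Rightarrow> 'a svec \<Rightarrow> bool" where
  "sless X Y \<longleftrightarrow> sle X Y \<and> X \<noteq> Y"

text \<open>Sign vectors on ground set E are functions that vanish outside E.\<close>
definition oriented_matroid :: "'a set \<Rightarrow> 'a svec set \<Rightarrow> bool" where
  "oriented_matroid E L \<longleftrightarrow>
     finite E \<and>
     (\<forall>X\<in>L. \<forall>e. e \<notin> E \<longrightarrow> X e = Zero) \<and>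
     zerov \<in> L \<and>
     (\<forall>X\<in>L. negv X \<in> L) \<and>
     (\<forall>X\<in>L. \<forall>Y\<in>L. compv X Y \<in> L) \<and>
     (\<forall>X\<in>L. \<forall>Y\<in>L. \<forall>e\<in>sepset X Y. \<exists>Z\<in>L. Z e = Zero \<and>
          (\<forall>f. f \<notin> sepset X Y \<longrightarrow> Z f = compv X Y f))"

definition maximal_in :: "'a svec set \<Rightarrow> 'a svec \<Rightarrow> bool" where
  "maximal_in L T \<longleftrightarrow> T \<in> L \<and> \<not> (\<exists>Y\<in>L. sless T Y)"

definition topes :: "'a svec set \<Rightarrow> 'a svec set" where
  "topes L = {T. maximal_in L T}"

definition zeroset :: "'a set \<Rightarrow> 'a svec \<Rightarrow> 'a set" where
  "zeroset E X = {e\<in>E. X e = Zero}"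

definition flats :: "'a set \<Rightarrow> 'a svec set \<Rightarrow> 'a set set" where
  "flats E L = zeroset E ` L"

definition mclosure :: "'a set \<Rightarrow> 'a svec set \<Rightarrow> 'a set \<Rightarrow> 'a set" where
  "mclosure E L A = E \<inter> \<Inter>{F\<in>flats E L. A \<subseteq> F}"

definition mindep :: "'a set \<Rightarrow> 'a svec set \<Rightarrow> 'a set \<Rightarrow> bool" where
  "mindep E L A \<longleftrightarrow> A \<subseteq> E \<and> (\<forall>a\<in>A. a \<notin> mclosure E L (A - {a}))"

definition mbases :: "'a set \<Rightarrow> 'a svec set \<Rightarrow> 'a set set" where
  "mbases E L = {B. mindep E L B \<and> \<not> (\<exists>B'. mindep E L B' \<and> B \<subset> B')}"

definition uniform_om :: "'a set \<Rightarrow> 'a svec set \<Rightarrow> bool" where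
  "uniform_om E L \<longleftrightarrow> (\<exists>r. mbases E L = {B. B \<subseteq> E \<and> card B = r})"

definition nonloop :: "'a set \<Rightarrow> 'a svec set \<Rightarrow> 'a \<Rightarrow> bool" where
  "nonloop E L g \<longleftrightarrow> g \<in> E \<and> (\<exists>X\<in>L. X g \<noteq> Zero)"

definition affine_om :: "'a set \<Rightarrow> 'a svec set \<Rightarrow> 'a \<Rightarrow> bool" where
  "affine_om E L g \<longleftrightarrow> oriented_matroid E L \<and> nonloop E L g"

definition Lplus :: "'a svec set \<Rightarrow> 'a \<Rightarrow> 'a svec set" where
  "Lplus L g = {X\<in>L. X g = Pos}"

definition Lpp :: "'a svec set \<Rightarrow> 'a \<Rightarrow> 'a svec set" where
  "Lpp L g = {X\<in>Lplus L g. \<forall>Y\<in>L. Y \<noteq> zerov \<and> sle Y X \<longrightarrow> Y g = Pos}"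

text \<open>Deletion of g from a sign vector (restriction to E - {g}), represented by
  setting the g-entry to 0.\<close>
definition del :: "'a svec \<Rightarrow> 'a \<Rightarrow> 'a svec" where
  "del X g = X(g := Zero)"

definition contr :: "'a svec set \<Rightarrow> 'a \<Rightarrow> 'a svec set" where
  "contr L g = {del Y g | Y. Y \<in> L \<and> Y g = Zero}"

definition CX :: "'a svec set \<Rightarrow> 'a \<Rightarrow> 'a svec \<Rightarrow> 'a svec set" where
  "CX L g X = {T\<in>topes L. sless X T \<and> T \<notin> Lpp L g}"

definition DX :: "'a svec set \<Rightarrow> 'a \<Rightarrow> 'a svec \<Rightarrow> 'a svec set" where
  "DX L g X = {T\<in>topes (contr L g). \<forall>e\<in>supp X - {g}. T e = X e}"

end

theory Submission imports Defs begin

text \<open>In a uniform oriented matroid of rank r every set of at most r elements is independent,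
  so a covector may prescribe any signs on it, and a nonzero covector vanishes on fewer than
  r elements. If a tope T above X is unbounded, this is witnessed by a nonzero covector Y \<le> T
  with Y g = 0; composing Y with a covector that agrees with T on the zero set of Y away from g
  yields T\g as a covector. Conversely, T\g \<in> L witnesses unboundedness because T\g \<noteq> 0.
  So for a tope T with T g = + unboundedness means T\g \<in> L, i.e. T\g is a tope of L/g.
  In the other direction a tope of L/g has full support away from g, so composing it with a
  covector that is positive at g gives a tope of L, the unique preimage.\<close>

lemma sneg_eq_Zero_iff [simp]: "sneg s = Zero \<longleftrightarrow> s = Zero"
  by (cases s) auto

lemma sle_imp_eq: "sle X Y \<Longrightarrow> X e \<noteq> Zero \<Longrightarrow> Y e = X e"
  unfolding sle_def by metis

lemma sless_compv:
  assumes "X e = Zero" "Y e \<noteq> Zero"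
  shows "sless X (compv X Y)"
proof -
  have "compv X Y e \<noteq> X e" using assms unfolding compv_def by simp
  then have "X \<noteq> compv X Y" by auto
  then show ?thesis unfolding sless_def sle_def compv_def by auto
qed

lemma sless_imp_zero_nonzero:
  assumes "sless X Y"
  obtains e where "X e = Zero" "Y e \<noteq> Zero"
proof -
  obtain e where "X e \<noteq> Y e" using assms unfolding sless_def by (meson ext)
  then show ?thesis using assms that unfolding sless_def sle_def by metis
qed

lemma maximal_in_compv_nonzero:
  assumes "maximal_in M T" "compv T Y \<in> M" "Y e \<noteq> Zero"
  shows "T e \<noteq> Zero"
proof
  assume "T e = Zero"
  then have "sless T (compv T Y)" using sless_compv assms(3) by metis
  then show False using assms(1,2) unfolding maximal_in_def by blast
qed

lemma sle_upd_if_agree_on_supp: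
  assumes "\<forall>e\<in>supp X - {g}. T e = X e"
  shows "sle X (T(g := X g))"
  unfolding sle_def
proof
  fix e
  show "X e = Zero \<or> X e = (T(g := X g)) e"
  proof (cases "e = g")
    case False
    then have "X e = Zero \<or> T e = X e" using assms unfolding supp_def by blast
    then show ?thesis using False by (metis fun_upd_other)
  qed simp
qed

lemma nonzero_if_agree_on_supp:
  assumes "del X g \<noteq> zerov" "\<forall>e\<in>supp X - {g}. T e = X e"
  shows "T \<noteq> zerov"
proof -
  obtain f where "del X g f \<noteq> Zero" using assms(1) unfolding zerov_def by (meson ext)
  then have "f \<noteq> g" "X f \<noteq> Zero" unfolding del_def by (cases "f = g"; simp)+
  then have "T f \<noteq> Zero" using assms(2) unfolding supp_def by simp
  then show ?thesis unfolding zerov_def by metis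
qed

lemma topesD: "T \<in> topes M \<Longrightarrow> T \<in> M"
  unfolding topes_def maximal_in_def by blast

lemma Lpp_subset_Lplus: "Lpp L g \<subseteq> Lplus L g"
  unfolding Lpp_def by blast

lemma Lplus_upward: "X \<in> Lplus L g \<Longrightarrow> sle X T \<Longrightarrow> T \<in> L \<Longrightarrow> T \<in> Lplus L g"
  unfolding Lplus_def using sle_imp_eq[of X T g] by auto

lemma mem_contr_iff: "Z \<in> contr L g \<longleftrightarrow> Z \<in> L \<and> Z g = Zero"
proof
  assume "Z \<in> L \<and> Z g = Zero"
  then show "Z \<in> contr L g" unfolding contr_def del_def by (auto intro!: exI[of _ Z])
qed (auto simp: contr_def del_def fun_upd_idem)

lemma
  assumes "oriented_matroid E L"
  shows om_finite: "finite E"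
    and om_vanish_outside: "X \<in> L \<Longrightarrow> e \<notin> E \<Longrightarrow> X e = Zero"
    and om_zerov: "zerov \<in> L"
    and om_negv: "X \<in> L \<Longrightarrow> negv X \<in> L"
    and om_compv: "X \<in> L \<Longrightarrow> Y \<in> L \<Longrightarrow> compv X Y \<in> L"
    and om_elim: "X \<in> L \<Longrightarrow> Y \<in> L \<Longrightarrow> e \<in> sepset X Y \<Longrightarrow>
      \<exists>Z\<in>L. Z e = Zero \<and> (\<forall>f. f \<notin> sepset X Y \<longrightarrow> Z f = compv X Y f)"
  using assms unfolding oriented_matroid_def by blast+

lemma covector_sign_choice:
  assumes "oriented_matroid E L" "W \<in> L" "W e \<noteq> Zero" "s \<noteq> Zero"
  obtains W' where "W' \<in> L" "W' e = s" "\<And>f. W' f = Zero \<longleftrightarrow> W f = Zero"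
proof (cases "W e = s")
  case True
  then show ?thesis using that assms(2) by blast
next
  case False
  then have "negv W e = s" using assms(3,4) unfolding negv_def by (cases s; cases "W e") auto
  then show ?thesis using that om_negv[OF assms(1,2)] unfolding negv_def by simp
qed

lemma tope_if_full_support:
  assumes om: "oriented_matroid E L" and "Z \<in> L" "\<forall>e\<in>E. Z e \<noteq> Zero"
  shows "Z \<in> topes L"
  unfolding topes_def maximal_in_def
proof (intro CollectI conjI notI \<open>Z \<in> L\<close>)
  assume "\<exists>Y\<in>L. sless Z Y"
  then obtain Y e where "Y \<in> L" "Z e = Zero" "Y e \<noteq> Zero"
    by (blast elim: sless_imp_zero_nonzero)
  then show False using assms om_vanish_outside[OF om \<open>Y \<in> L\<close>] by blast
qed

lemma lift_to_tope:
  assumes om: "oriented_matroid E L" and "nonloop E L g"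
    and T: "T \<in> L" "T g = Zero" "\<forall>e\<in>E-{g}. T e \<noteq> Zero"
  shows "T(g := Pos) \<in> topes L"
proof -
  obtain W0 where "g \<in> E" "W0 \<in> L" "W0 g \<noteq> Zero"
    using \<open>nonloop E L g\<close> unfolding nonloop_def by blast
  then obtain W where W: "W \<in> L" "W g = Pos"
    using covector_sign_choice[OF om, of W0 g Pos] by blast
  have "compv T W = T(g := Pos)"
  proof
    fix f
    show "compv T W f = (T(g := Pos)) f"
      using T W om_vanish_outside[OF om T(1)] om_vanish_outside[OF om W(1)]
      unfolding compv_def by (cases "f \<in> E") auto
  qed
  then have "T(g := Pos) \<in> L" using om_compv[OF om T(1) W(1)] by simp
  moreover have "\<forall>e\<in>E. (T(g := Pos)) e \<noteq> Zero" using T(3) by simp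
  ultimately show ?thesis by (rule tope_if_full_support[OF om])
qed

lemma del_tope_in_topes_contr:
  assumes om: "oriented_matroid E L" and T: "T \<in> topes L" and "del T g \<in> L"
  shows "del T g \<in> topes (contr L g)"
  unfolding topes_def maximal_in_def
proof (intro CollectI conjI notI)
  show "del T g \<in> contr L g" using \<open>del T g \<in> L\<close> by (simp add: mem_contr_iff del_def)
  assume "\<exists>Z\<in>contr L g. sless (del T g) Z"
  then obtain Z where Z: "Z \<in> L" "Z g = Zero" "sless (del T g) Z"
    by (auto simp: mem_contr_iff)
  obtain e where "del T g e = Zero" "Z e \<noteq> Zero"
    using Z(3) by (blast elim: sless_imp_zero_nonzero)
  then have "T e = Zero" using Z(2) unfolding del_def by (cases "e = g") auto
  moreover have "T e \<noteq> Zero"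
    using maximal_in_compv_nonzero[OF _ om_compv[OF om topesD[OF T] Z(1)] \<open>Z e \<noteq> Zero\<close>] T
    unfolding topes_def by simp
  ultimately show False by simp
qed

lemma mclosure_iff:
  "a \<in> mclosure E L A \<longleftrightarrow> a \<in> E \<and> (\<forall>Y\<in>L. A \<subseteq> zeroset E Y \<longrightarrow> a \<in> zeroset E Y)"
  unfolding mclosure_def flats_def by auto

lemma mindep_subset: "mindep E L A \<Longrightarrow> B \<subseteq> A \<Longrightarrow> mindep E L B"
  unfolding mindep_def mclosure_iff by blast

lemma mindep_coordinate_covector:
  assumes "mindep E L I" "e \<in> I"
  obtains W where "W \<in> L" "W e \<noteq> Zero" "\<forall>f\<in>I-{e}. W f = Zero"
proof -
  have "e \<notin> mclosure E L (I - {e})" "e \<in> E" using assms unfolding mindep_def by auto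
  then obtain W where "W \<in> L" "I - {e} \<subseteq> zeroset E W" "e \<notin> zeroset E W"
    unfolding mclosure_iff by auto
  then show ?thesis using that \<open>e \<in> E\<close> unfolding zeroset_def by auto
qed

lemma mindep_extend_to_basis:
  assumes "finite E" "mindep E L A"
  obtains B where "B \<in> mbases E L" "A \<subseteq> B"
proof -
  let ?S = "{B. mindep E L B \<and> A \<subseteq> B}"
  have "finite ?S"
    by (rule finite_subset[of _ "Pow E"]) (auto simp: mindep_def assms(1))
  then obtain B where "B \<in> ?S" "\<forall>C\<in>?S. B \<subseteq> C \<longrightarrow> B = C"
    using finite_has_maximal2[of ?S A] assms(2) by auto
  then have "B \<in> mbases E L" "A \<subseteq> B" unfolding mbases_def by auto
  then show ?thesis using that by blast
qed

lemma covector_zero_if_zero_on_basis: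
  assumes om: "oriented_matroid E L" and B: "B \<in> mbases E L"
    and Y: "Y \<in> L" "\<forall>b\<in>B. Y b = Zero"
  shows "Y = zerov"
proof (rule ccontr)
  assume "Y \<noteq> zerov"
  then obtain x where Yx: "Y x \<noteq> Zero" unfolding zerov_def by auto
  then have "x \<in> E" "x \<notin> B" using om_vanish_outside[OF om Y(1)] Y(2) by auto
  have mB: "mindep E L B" using B unfolding mbases_def by blast
  have "\<not> mindep E L (insert x B)" using B \<open>x \<notin> B\<close> unfolding mbases_def by blast
  then obtain a where a: "a \<in> insert x B" "a \<in> mclosure E L (insert x B - {a})"
    using mB \<open>x \<in> E\<close> unfolding mindep_def by blast
  have closed: "Z a = Zero" if "Z \<in> L" "\<forall>b\<in>insert x B - {a}. Z b = Zero" for Z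
  proof -
    have "insert x B - {a} \<subseteq> zeroset E Z"
      using that(2) mB \<open>x \<in> E\<close> unfolding mindep_def zeroset_def by auto
    then show ?thesis using a(2) that(1) unfolding mclosure_iff zeroset_def by blast
  qed
  show False
  proof (cases "a = x")
    case True
    then show False using closed[OF Y(1)] Y(2) Yx \<open>x \<notin> B\<close> by auto
  next
    case False
    then have "a \<in> B" using a(1) by auto
    then obtain W where W: "W \<in> L" "W a \<noteq> Zero" "\<forall>b\<in>B-{a}. W b = Zero"
      using mindep_coordinate_covector[OF mB] by blast
    \<comment> \<open>Eliminating x between W and Y or -Y gives a covector vanishing on
      insert x B - {a} but not at a, contradicting a \<in> closure.\<close>
    have "W x \<noteq> Zero" using closed[OF W(1)] W(2,3) False by auto
    then obtain Y' where Y': "Y' \<in> L" "Y' x = sneg (W x)" "\<And>f. Y' f = Zero \<longleftrightarrow> Y f = Zero"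
      using covector_sign_choice[OF om Y(1) Yx, of "sneg (W x)"] by auto
    have "x \<in> sepset W Y'" using Y'(2) \<open>W x \<noteq> Zero\<close> unfolding sepset_def by (cases "W x") auto
    then obtain Z where Z: "Z \<in> L" "Z x = Zero" "\<forall>f. f \<notin> sepset W Y' \<longrightarrow> Z f = compv W Y' f"
      using om_elim[OF om W(1) Y'(1)] by blast
    have "Y' a = Zero" using Y'(3) Y(2) \<open>a \<in> B\<close> by simp
    then have "Z a = W a" using Z(3) W(2) unfolding sepset_def compv_def by auto
    moreover have "\<forall>b\<in>B-{a}. Z b = Zero"
      using Z(3) W(3) Y'(3) Y(2) unfolding sepset_def compv_def by auto
    ultimately show False using closed[OF Z(1)] Z(2) W(2) by auto
  qed
qed

lemma mindep_realize_signs: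
  assumes om: "oriented_matroid E L" and I: "mindep E L I"
    and K: "K \<subseteq> I" "\<forall>e\<in>K. T e \<noteq> Zero"
  obtains V where "V \<in> L" "\<forall>f\<in>K. V f = T f" "\<forall>f\<in>I-K. V f = Zero"
proof -
  have "finite K" using K(1) I om_finite[OF om] unfolding mindep_def by (meson finite_subset)
  then have "\<exists>V\<in>L. (\<forall>f\<in>K. V f = T f) \<and> (\<forall>f\<in>I-K. V f = Zero)"
    using K
  proof (induction K rule: finite_induct)
    case empty
    then show ?case using om_zerov[OF om] unfolding zerov_def by auto
  next
    case (insert e K)
    then obtain V where V: "V \<in> L" "\<forall>f\<in>K. V f = T f" "\<forall>f\<in>I-K. V f = Zero" by auto
    obtain W where W: "W \<in> L" "W e \<noteq> Zero" "\<forall>f\<in>I-{e}. W f = Zero"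
      using mindep_coordinate_covector[OF I] insert.prems by blast
    obtain W' where W': "W' \<in> L" "W' e = T e" "\<forall>f\<in>I-{e}. W' f = Zero"
    proof (rule covector_sign_choice[OF om W(1,2), of "T e"])
      show "T e \<noteq> Zero" using insert.prems by simp
    qed (use W(3) in auto)
    have "compv V W' \<in> L" using om_compv[OF om V(1) W'(1)] .
    moreover have "\<forall>f\<in>insert e K. compv V W' f = T f" "\<forall>f\<in>I - insert e K. compv V W' f = Zero"
      using V W' insert unfolding compv_def by auto
    ultimately show ?case by blast
  qed
  then show ?thesis using that by blast
qed

locale uniform_oriented_matroid =
  fixes E :: "'a set" and L :: "'a svec set" and r :: nat
  assumes om: "oriented_matroid E L"
    and mbases_eq: "mbases E L = {B. B \<subseteq> E \<and> card B = r}"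
begin

lemma rank_le_card: "r \<le> card E"
proof -
  have "mindep E L {}" unfolding mindep_def by auto
  then obtain B where "B \<in> mbases E L" using mindep_extend_to_basis om_finite[OF om] by blast
  then show ?thesis using mbases_eq om_finite[OF om] by (auto intro: card_mono)
qed

lemma mindep_if_card_le:
  assumes "A \<subseteq> E" "card A \<le> r"
  shows "mindep E L A"
proof -
  have "finite E" using om_finite[OF om] .
  then have "r - card A \<le> card (E - A)" using rank_le_card assms
    by (simp add: card_Diff_subset finite_subset)
  then obtain C where C: "C \<subseteq> E - A" "card C = r - card A" "finite C"
    by (rule obtain_subset_with_card_n)
  have "card (A \<union> C) = r"
    using C assms \<open>finite E\<close> by (subst card_Un_disjoint) (auto intro: finite_subset)
  then have "mindep E L (A \<union> C)" using mbases_eq assms(1) C(1) unfolding mbases_def by blast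
  then show ?thesis by (rule mindep_subset) auto
qed

lemma card_zeroset_less_rank:
  assumes "Y \<in> L" "Y \<noteq> zerov"
  shows "card (zeroset E Y) < r"
proof (rule ccontr)
  assume "\<not> card (zeroset E Y) < r"
  then obtain B where B: "B \<subseteq> zeroset E Y" "card B = r"
    by (metis not_less obtain_subset_with_card_n)
  then have "B \<in> mbases E L" "\<forall>b\<in>B. Y b = Zero"
    using mbases_eq unfolding zeroset_def by auto
  then show False using covector_zero_if_zero_on_basis[OF om _ assms(1)] assms(2) by blast
qed

lemma two_le_rank_if_nonzero_zero_at:
  assumes "g \<in> E" "Y \<in> L" "Y \<noteq> zerov" "Y g = Zero"
  shows "2 \<le> r"
proof -
  have "finite (zeroset E Y)" using om_finite[OF om] unfolding zeroset_def by auto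
  moreover have "g \<in> zeroset E Y" using assms unfolding zeroset_def by auto
  ultimately have "0 < card (zeroset E Y)" by (auto simp: card_gt_0_iff)
  then show ?thesis using card_zeroset_less_rank[OF assms(2,3)] by linarith
qed

lemma del_in_covectors:
  assumes T: "T \<in> L" and Y: "Y \<in> L" "Y \<noteq> zerov" "sle Y T" "Y g = Zero"
  shows "del T g \<in> L"
proof -
  define I where "I = zeroset E Y"
  define K where "K = {e\<in>I. e \<noteq> g \<and> T e \<noteq> Zero}"
  have "I \<subseteq> E" "card I < r"
    using card_zeroset_less_rank[OF Y(1,2)] unfolding I_def zeroset_def by auto
  then have "mindep E L I" by (simp add: mindep_if_card_le)
  moreover have "K \<subseteq> I" "\<forall>e\<in>K. T e \<noteq> Zero" unfolding K_def by auto
  ultimately obtain V where V: "V \<in> L" "\<forall>f\<in>K. V f = T f" "\<forall>f\<in>I-K. V f = Zero"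
    using mindep_realize_signs[OF om] by blast
  \<comment> \<open>Y already agrees with T off its zero set I, and V supplies T on I except at g.\<close>
  have "compv Y V = del T g"
    using Y(3,4) V(2,3) om_vanish_outside[OF om T] om_vanish_outside[OF om V(1)]
    unfolding compv_def del_def sle_def I_def K_def zeroset_def by fastforce
  then show ?thesis using om_compv[OF om Y(1) V(1)] by simp
qed

lemma contr_tope_nonzero:
  assumes "2 \<le> r" "g \<in> E" "T \<in> topes (contr L g)" "e \<in> E" "e \<noteq> g"
  shows "T e \<noteq> Zero"
proof -
  have "mindep E L {g, e}" using mindep_if_card_le assms by auto
  then obtain Q where Q: "Q \<in> L" "Q e \<noteq> Zero" "Q g = Zero"
    using mindep_coordinate_covector[of E L "{g, e}" e] assms(5) by auto
  have T: "T \<in> L" "T g = Zero" using assms(3) unfolding topes_def maximal_in_def mem_contr_iff by auto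
  have "compv T Q \<in> L" using om_compv[OF om T(1) Q(1)] .
  moreover have "compv T Q g = Zero" using T(2) Q(3) unfolding compv_def by simp
  ultimately have "compv T Q \<in> contr L g" by (simp add: mem_contr_iff)
  then show ?thesis using maximal_in_compv_nonzero[of _ T Q e] Q(2) assms(3) unfolding topes_def by blast
qed

end

locale uniform_affine_om = uniform_oriented_matroid +
  fixes g :: 'a
  assumes nonloop: "nonloop E L g"
    and del_Lplus_nonzero: "\<forall>Y\<in>Lplus L g. del Y g \<noteq> zerov"
begin

lemma not_Lpp_iff_del_in_covectors:
  assumes "T \<in> Lplus L g"
  shows "T \<notin> Lpp L g \<longleftrightarrow> del T g \<in> L"
proof
  assume "T \<notin> Lpp L g"
  then obtain Y where Y: "Y \<in> L" "Y \<noteq> zerov" "sle Y T" "Y g \<noteq> Pos"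
    using assms unfolding Lpp_def by auto
  then have "Y g = Zero" using sle_imp_eq[OF Y(3)] assms unfolding Lplus_def by force
  then show "del T g \<in> L" using del_in_covectors Y assms unfolding Lplus_def by blast
next
  assume "del T g \<in> L"
  moreover have "del T g \<noteq> zerov" using assms del_Lplus_nonzero by blast
  moreover have "sle (del T g) T" unfolding sle_def del_def by auto
  ultimately show "T \<notin> Lpp L g" unfolding Lpp_def del_def by auto
qed

context
  fixes X assumes X: "X \<in> Lpp L g"
begin

lemma del_CX_in_DX:
  assumes "T \<in> CX L g X"
  shows "del T g \<in> DX L g X"
proof -
  have T: "T \<in> topes L" "sle X T" "T \<notin> Lpp L g"
    using assms unfolding CX_def sless_def by auto
  have "T \<in> Lplus L g"
    by (rule Lplus_upward[OF subsetD[OF Lpp_subset_Lplus X] T(2) topesD[OF T(1)]])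
  then have "del T g \<in> topes (contr L g)"
    using del_tope_in_topes_contr[OF om T(1)] not_Lpp_iff_del_in_covectors T(3) by blast
  moreover have "\<forall>e\<in>supp X - {g}. del T g e = X e"
    using T(2) unfolding sle_def supp_def del_def by auto
  ultimately show ?thesis unfolding DX_def by blast
qed

lemma CX_if_del_in_DX:
  assumes T: "T \<in> topes L" "sless X T" and "del T g \<in> DX L g X"
  shows "T \<in> CX L g X"
proof -
  have "sle X T" using T(2) unfolding sless_def by blast
  then have "T \<in> Lplus L g"
    by (rule Lplus_upward[OF subsetD[OF Lpp_subset_Lplus X] _ topesD[OF T(1)]])
  moreover have "del T g \<in> L" using assms(3) unfolding DX_def topes_def maximal_in_def mem_contr_iff by blast
  ultimately show ?thesis using T not_Lpp_iff_del_in_covectors unfolding CX_def by blast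
qed

lemma lift_DX_in_CX:
  assumes "T \<in> DX L g X"
  shows "T(g := Pos) \<in> CX L g X"
proof -
  have T: "T \<in> topes (contr L g)" "T \<in> L" "T g = Zero" "\<forall>e\<in>supp X - {g}. T e = X e"
    using assms unfolding DX_def topes_def maximal_in_def mem_contr_iff by auto
  have gE: "g \<in> E" using nonloop unfolding nonloop_def by blast
  have XP: "X \<in> Lplus L g" using subsetD[OF Lpp_subset_Lplus X] .
  have "T \<noteq> zerov" by (rule nonzero_if_agree_on_supp[OF bspec[OF del_Lplus_nonzero XP] T(4)])
  then have "2 \<le> r" using two_le_rank_if_nonzero_zero_at[OF gE T(2) _ T(3)] by blast
  then have "\<forall>e\<in>E-{g}. T e \<noteq> Zero" using contr_tope_nonzero[OF _ gE T(1)] by blast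
  then have Z: "T(g := Pos) \<in> topes L" by (rule lift_to_tope[OF om nonloop T(2,3)])
  then have "T(g := Pos) \<in> Lplus L g" using topesD[OF Z] unfolding Lplus_def by simp
  then have "T(g := Pos) \<notin> Lpp L g"
    using not_Lpp_iff_del_in_covectors T(2,3) by (simp add: del_def fun_upd_idem)
  moreover have "sle X (T(g := Pos))"
    using sle_upd_if_agree_on_supp[OF T(4)] XP unfolding Lplus_def by simp
  ultimately show ?thesis using Z X unfolding CX_def sless_def by auto
qed

end

end

theorem lemma4p4:
  fixes E :: "'a set" and L :: "'a svec set" and g :: 'a and X :: "'a svec"
  assumes "affine_om E L g"
    and "uniform_om E L"
    and "card E > 1"
    and "\<forall>Y. maximal_in (Lpp L g) Y \<longrightarrow> Y \<in> topes L"
    and "\<forall>Y\<in>Lplus L g. del Y g \<noteq> zerov"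
    and "X \<in> Lpp L g"
  shows "(\<forall>T\<in>topes L. sless X T \<longrightarrow> (T \<in> CX L g X \<longleftrightarrow> del T g \<in> DX L g X))
    \<and> bij_betw (\<lambda>T. del T g) (CX L g X) (DX L g X)
    \<and> (\<forall>T\<in>DX L g X. T(g := Pos) \<in> CX L g X \<and> del (T(g := Pos)) g = T)
    \<and> (\<forall>T\<in>CX L g X. (del T g)(g := Pos) = T)"
proof -
  obtain r where "uniform_affine_om E L r g"
    using assms(1,2,5) unfolding uniform_affine_om_def uniform_oriented_matroid_def
      uniform_affine_om_axioms_def affine_om_def uniform_om_def by blast
  then interpret uniform_affine_om E L r g .
  have del_lift: "del (T(g := Pos)) g = T" if "T \<in> DX L g X" for T
    using that unfolding DX_def topes_def maximal_in_def mem_contr_iff del_def by auto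
  have lift_del: "(del T g)(g := Pos) = T" if "T \<in> CX L g X" for T
    using that sle_imp_eq[of X T g] assms(6) unfolding CX_def sless_def Lpp_def Lplus_def del_def
    by auto
  have "bij_betw (\<lambda>T. del T g) (CX L g X) (DX L g X)"
  proof (rule bij_betw_byWitness[where f' = "\<lambda>T. T(g := Pos)"])
    show "\<forall>T\<in>CX L g X. (del T g)(g := Pos) = T" using lift_del by blast
    show "\<forall>T\<in>DX L g X. del (T(g := Pos)) g = T" using del_lift by blast
    show "(\<lambda>T. del T g) ` CX L g X \<subseteq> DX L g X" using del_CX_in_DX[OF assms(6)] by blast
    show "(\<lambda>T. T(g := Pos)) ` DX L g X \<subseteq> CX L g X" using lift_DX_in_CX[OF assms(6)] by blast
  qed
  moreover have "\<forall>T\<in>topes L. sless X T \<longrightarrow> (T \<in> CX L g X \<longleftrightarrow> del T g \<in> DX L g X)"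
    using del_CX_in_DX[OF assms(6)] CX_if_del_in_DX[OF assms(6)] by blast
  ultimately show ?thesis using lift_DX_in_CX[OF assms(6)] del_lift lift_del by blast
qed

end
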